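(* Let $\bm{\mu}\in X^{\mathcal{L}(\mathcal{T})}$ and let $d_s(\bm{\mu})$ and $\bm{w}^s(\bm{\mu})$ be computed by the recursive formula described in the context (for any admissible choices of $c^*(s)$ and of the arbitrary vectors). Then for every node $s\in S$, \[d_s(\bm{\mu})=\max_{\bm{w}\in\Delta_s}\inf_{\bm{\lambda}\in\mathrm{Alt}_s(\bm{\mu})}\sum_{\ell\in\mathcal{D}(s)}w_\ell d(\mu_\ell,\lambda_\ell),\] and $\bm{w}^s(\bm{\mu})$ attains this maximum.
   Context: $\mathcal{T}$ is a finite rooted tree with node set $S$, root $s_0$, children sets $\mathcal{C}(s)$, leaf set $\mathcal{L}(\mathcal{T})$ (nodes without children), and $\mathcal{D}(s)$ the set of leaves descending from $s$ ($\{s\}$ for a leaf). Internal nodes have labels $L(s)\in\{\text{MAX},\text{MIN}\}$. $X\subseteq\mathbb{R}$ is the mean-parameter set of a one-parameter exponential family, $d(x,y)$ the KL divergence between its members with means $x$ and $y$, $\theta\in X$ a threshold. For $\bm{\lambda}$ with coordinates indexed by (a superset of) $\mathcal{D}(s)$: $V_s(\bm{\lambda})=\lambda_s$ at a leaf, $\max_{c\in\mathcal{C}(s)}V_c(\bm{\lambda})$ if $L(s)=$MAX, $\min_{c}V_c(\bm{\lambda})$ if MIN; $a_s(\bm{\lambda})=$'win' iff $V_s(\bm{\lambda})\ge\theta$, else 'lose'. $\Delta_s=\{(w_\ell)_{\ell\in\mathcal{D}(s)}:w_\ell\ge0,\sum w_\ell=1\}$ and $\mathrm{Alt}_s(\bm{\mu})=\{\bm{\lambda}\in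 X^{\mathcal{D}(s)}:a_s(\bm{\lambda})\neq a_{s_0}(\bm{\mu})\}$. Recursive formula: let $a^*=a_{s_0}(\bm{\mu})$, and $P=$MAX, $Q=$MIN if $a^*=$'win', $P=$MIN, $Q=$MAX if $a^*=$'lose'. Bottom-up: for a leaf $s$: $w^s_s=1$; $d_s=d(\mu_s,\theta)$ if ($a^*=$'win' and $\mu_s\ge\theta$) or ($a^*=$'lose' and $\mu_s<\theta$), otherwise $d_s=0$. If $L(s)=P$: $d_s=\max_{c\in\mathcal{C}(s)}d_c$; choose $c^*(s)\in\arg\max_c d_c$; if $d_s>0$, $w^s_\ell=w^{c^*(s)}_\ell$ for $\ell\in\mathcal{D}(c^*(s))$ and $w^s_\ell=0$ for $\ell\in\mathcal{D}(c)$, $c\ne c^*(s)$. If $L(s)=Q$ and $d_c>0$ for all $c\in\mathcal{C}(s)$: $d_s=1/\sum_{c}(1/d_c)$ and $w^s_\ell=\frac{w^c_\ell/d_c}{\sum_{c'\in\mathcal{C}(s)}1/d_{c'}}$ for $\ell\in\mathcal{D}(c)$, $c\in\mathcal{C}(s)$. If $L(s)=Q$ and some $d_c=0$: $d_s=0$. For any internal $s$ with $d_s=0$, $\bm{w}^s$ is an arbitrary element of $\Delta_s$. (All $d_c,w^c$ are evaluated at $\bm{\mu}$.) *)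

theory Defs
  imports "HOL-Analysis.Analysis"
begin

text \<open>A (regular, nondegenerate) one-parameter exponential family with log-partition
function b on the open natural-parameter interval Theta: densities exp(eta*x - b eta).
b' is the derivative of b (the mean map), which has a positive derivative (the variance).\<close>

definition expfam :: "(real \<Rightarrow> real) \<Rightarrow> (real \<Rightarrow> real) \<Rightarrow> real set \<Rightarrow> bool" where
  "expfam b b' Th \<longleftrightarrow> Th \<noteq> {} \<and> open Th \<and> is_interval Th \<and>
     (\<forall>t\<in>Th. (b has_real_derivative b' t) (at t)) \<and>
     (\<forall>t\<in>Th. \<exists>v>0. (b' has_real_derivative v) (at t))"

definition mean_set :: "(real \<Rightarrow> real) \<Rightarrow> real set \<Rightarrow> real set" where
  "mean_set b' Th = b' ` Th"

text \<open>KL divergence between the members with means x and y: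
  KL(P_eta(x) || P_eta(y)) = (eta x - eta y) * x - b(eta x) + b(eta y).\<close>
definition KL :: "(real \<Rightarrow> real) \<Rightarrow> (real \<Rightarrow> real) \<Rightarrow> real set \<Rightarrow> real \<Rightarrow> real \<Rightarrow> real" where
  "KL b b' Th x y = (let eta = inv_into Th b' in
      (eta x - eta y) * x - b (eta x) + b (eta y))"

datatype label = LMAX | LMIN

datatype 'l gtree = Leaf 'l | Node label "'l gtree list"

fun leaves :: "'l gtree \<Rightarrow> 'l list" where
  "leaves (Leaf l) = [l]"
| "leaves (Node a cs) = concat (map leaves cs)"

abbreviation desc :: "'l gtree \<Rightarrow> 'l set" where
  "desc s \<equiv> set (leaves s)"

fun wf_tree :: "'l gtree \<Rightarrow> bool" where
  "wf_tree (Leaf l) = True"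
| "wf_tree (Node a cs) = (cs \<noteq> [] \<and> (\<forall>c\<in>set cs. wf_tree c))"

text \<open>the node set S of a tree: all its subtrees\<close>
fun subtrees :: "'l gtree \<Rightarrow> 'l gtree set" where
  "subtrees (Leaf l) = {Leaf l}"
| "subtrees (Node a cs) = insert (Node a cs) (\<Union>c\<in>set cs. subtrees c)"

fun val :: "'l gtree \<Rightarrow> ('l \<Rightarrow> real) \<Rightarrow> real" where
  "val (Leaf l) lam = lam l"
| "val (Node LMAX cs) lam = Max (set (map (\<lambda>c. val c lam) cs))"
| "val (Node LMIN cs) lam = Min (set (map (\<lambda>c. val c lam) cs))"

text \<open>a_s(lambda) = 'win' is encoded as True, 'lose' as False\<close>
definition wins :: "real \<Rightarrow> 'l gtree \<Rightarrow> ('l \<Rightarrow> real) \<Rightarrow> bool" where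
  "wins th s lam \<longleftrightarrow> th \<le> val s lam"

text \<open>Delta_s (vectors indexed by D(s); values outside D(s) are irrelevant)\<close>
definition tsimplex :: "'l gtree \<Rightarrow> ('l \<Rightarrow> real) set" where
  "tsimplex s = {w. (\<forall>l\<in>desc s. 0 \<le> w l) \<and> (\<Sum>l\<in>desc s. w l) = 1}"

text \<open>Alt_s(mu), given astar = a_{s0}(mu)\<close>
definition Alt :: "real set \<Rightarrow> real \<Rightarrow> bool \<Rightarrow> 'l gtree \<Rightarrow> ('l \<Rightarrow> real) set" where
  "Alt X th astar s = {lam. (\<forall>l\<in>desc s. lam l \<in> X) \<and> wins th s lam \<noteq> astar}"

definition objective :: "(real \<Rightarrow> real \<Rightarrow> real) \<Rightarrow> real set \<Rightarrow> real \<Rightarrow> bool \<Rightarrow> ('l \<Rightarrow> real)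
    \<Rightarrow> 'l gtree \<Rightarrow> ('l \<Rightarrow> real) \<Rightarrow> real" where
  "objective d X th astar mu s w =
     Inf ((\<lambda>lam. \<Sum>l\<in>desc s. w l * d (mu l) (lam l)) ` Alt X th astar s)"

section \<open>The recursive formula (relational: it allows every admissible choice)\<close>

text \<open>rec_dw d th mu astar s ds ws: (ds, ws) is a possible outcome of the recursive
  formula at node s, with P = MAX if astar ('win') and P = MIN otherwise.\<close>
inductive rec_dw :: "(real \<Rightarrow> real \<Rightarrow> real) \<Rightarrow> real \<Rightarrow> ('l \<Rightarrow> real) \<Rightarrow> bool
    \<Rightarrow> 'l gtree \<Rightarrow> real \<Rightarrow> ('l \<Rightarrow> real) \<Rightarrow> bool"
  for d th mu astar where
  leaf: "rec_dw d th mu astar (Leaf l)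
           (if (astar \<and> th \<le> mu l) \<or> (\<not> astar \<and> mu l < th) then d (mu l) th else 0)
           (\<lambda>m. if m = l then 1 else 0)"
| P_pos: "\<lbrakk> L = (if astar then LMAX else LMIN);
            list_all2 (\<lambda>c r. rec_dw d th mu astar c (fst r) (snd r)) cs rs;
            i < length cs;
            fst (rs ! i) = Max (fst ` set rs);
            fst (rs ! i) > 0;
            \<forall>j<length cs. \<forall>l\<in>desc (cs ! j). w l = (if j = i then snd (rs ! i) l else 0) \<rbrakk>
          \<Longrightarrow> rec_dw d th mu astar (Node L cs) (fst (rs ! i)) w"
| P_zero: "\<lbrakk> L = (if astar then LMAX else LMIN);
            list_all2 (\<lambda>c r. rec_dw d th mu astar c (fst r) (snd r)) cs rs;
            Max (fst ` set rs) = 0;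
            w \<in> tsimplex (Node L cs) \<rbrakk>
          \<Longrightarrow> rec_dw d th mu astar (Node L cs) 0 w"
| Q_pos: "\<lbrakk> L = (if astar then LMIN else LMAX);
            list_all2 (\<lambda>c r. rec_dw d th mu astar c (fst r) (snd r)) cs rs;
            \<forall>r\<in>set rs. fst r > 0;
            H = (\<Sum>r\<leftarrow>rs. 1 / fst r);
            \<forall>j<length cs. \<forall>l\<in>desc (cs ! j). w l = (snd (rs ! j) l / fst (rs ! j)) / H \<rbrakk>
          \<Longrightarrow> rec_dw d th mu astar (Node L cs) (1 / H) w"
| Q_zero: "\<lbrakk> L = (if astar then LMIN else LMAX);
            list_all2 (\<lambda>c r. rec_dw d th mu astar c (fst r) (snd r)) cs rs;
            \<exists>r\<in>set rs. fst r = 0;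
            w \<in> tsimplex (Node L cs) \<rbrakk>
          \<Longrightarrow> rec_dw d th mu astar (Node L cs) 0 w"

end

theory Submission
  imports Defs
begin

text \<open>For fixed weights \<open>w\<close> the infimum over \<open>Alt\<^sub>s(\<mu>)\<close> decouples along the tree. To change
  the outcome of a node of player \<open>P\<close> every child has to change its outcome, so the costs of the
  children add up; at a node of \<open>Q\<close> one child suffices, so the cheapest child counts; at a leaf the
  cheapest alternative moves the mean to \<open>\<theta>\<close> (or just below it) at cost \<open>w\<^sub>l d(\<mu>\<^sub>l, \<theta>)\<close>, or costs
  nothing if the leaf already has the alternative outcome. This only uses that \<open>d(\<mu>, \<cdot>)\<close> vanishes
  at \<open>\<mu>\<close>, grows away from \<open>\<mu>\<close> and is continuous from below.
  The closed form is positively homogeneous in \<open>w\<close>, and is maximised over the simplex bottom-up: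
  at a \<open>P\<close>-node (a sum) all mass goes to the best child, at a \<open>Q\<close>-node (a minimum) the children
  are equalised, which produces the harmonic combination of the recursive formula.\<close>

section \<open>Divergences increasing away from the diagonal\<close>

text \<open>Approximation is needed from below only: a win (\<open>th \<le> V\<close>) is flipped by values strictly
  below \<open>th\<close>, while \<open>th\<close> itself already flips a loss.\<close>

locale monotone_divergence =
  fixes X :: "real set" and d :: "real \<Rightarrow> real \<Rightarrow> real"
  assumes d_self: "x \<in> X \<Longrightarrow> d x x = 0"
    and d_antimono_below: "\<lbrakk>x \<in> X; y \<in> X; z \<in> X; y \<le> z; z \<le> x\<rbrakk> \<Longrightarrow> d x z \<le> d x y"
    and d_mono_above: "\<lbrakk>x \<in> X; y \<in> X; z \<in> X; x \<le> y; y \<le> z\<rbrakk> \<Longrightarrow> d x y \<le> d x z"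
    and d_approx_from_below: "\<lbrakk>x \<in> X; t \<in> X; 0 < e\<rbrakk> \<Longrightarrow> \<exists>y\<in>X. y < t \<and> d x y < d x t + e"
begin

lemma d_nonneg:
  assumes "x \<in> X" "y \<in> X"
  shows "0 \<le> d x y"
  using d_antimono_below[OF assms(1,2,1)] d_mono_above[OF assms(1,1,2)] d_self[OF assms(1)]
  by (cases "y \<le> x") auto

end

section \<open>The Kullback-Leibler divergence of an exponential family\<close>

lemma expfam_interval:
  assumes "expfam b b' Th" "s \<in> Th" "t \<in> Th" "s \<le> u" "u \<le> t"
  shows "u \<in> Th"
  using assms unfolding expfam_def is_interval_1 by blast

lemma expfam_strict_mono:
  assumes ef: "expfam b b' Th"
  shows "strict_mono_on Th b'"
proof (rule strict_mono_onI)
  fix s t assume "s \<in> Th" "t \<in> Th" "s < t"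
  show "b' s < b' t"
  proof (rule DERIV_pos_imp_increasing[OF \<open>s < t\<close>])
    fix u assume "s \<le> u" "u \<le> t"
    then have "u \<in> Th" using expfam_interval[OF ef \<open>s \<in> Th\<close> \<open>t \<in> Th\<close>] by blast
    then show "\<exists>v. (b' has_real_derivative v) (at u) \<and> 0 < v" using ef unfolding expfam_def by blast
  qed
qed

lemma natural_param_in: "x \<in> mean_set b' Th \<Longrightarrow> inv_into Th b' x \<in> Th"
  unfolding mean_set_def by (simp add: inv_into_into)

lemma mean_natural_param: "x \<in> mean_set b' Th \<Longrightarrow> b' (inv_into Th b' x) = x"
  unfolding mean_set_def by (simp add: f_inv_into_f)

lemma natural_param_mono:
  assumes ef: "expfam b b' Th" and "x \<in> mean_set b' Th" "y \<in> mean_set b' Th" "x \<le> y"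
  shows "inv_into Th b' x \<le> inv_into Th b' y"
  using strict_mono_on_less_eq[OF expfam_strict_mono[OF ef] natural_param_in[OF assms(2)] natural_param_in[OF assms(3)]]
    assms(4) by (simp add: mean_natural_param assms(2,3))

text \<open>With \<open>\<phi>\<^sub>x t = b t - t x\<close>, the divergence is \<open>KL x y = \<phi>\<^sub>x (\<eta> y) - \<phi>\<^sub>x (\<eta> x)\<close>, where
  \<open>\<eta> = inv_into Th b'\<close>; \<open>\<phi>\<^sub>x\<close> has derivative \<open>b' - x\<close>, hence is minimal at \<open>\<eta> x\<close>.\<close>

lemma KL_eq_phi_diff:
  "KL b b' Th x y = (b (inv_into Th b' y) - inv_into Th b' y * x) - (b (inv_into Th b' x) - inv_into Th b' x * x)"
  unfolding KL_def Let_def by (simp add: algebra_simps)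

lemma phi_derivative:
  assumes "expfam b b' Th" "u \<in> Th"
  shows "((\<lambda>t. b t - t * x) has_real_derivative b' u - x) (at u)"
proof -
  have "(b has_real_derivative b' u) (at u)" using assms unfolding expfam_def by blast
  then show ?thesis by (auto intro!: derivative_eq_intros)
qed

lemma phi_antimono_below:
  assumes ef: "expfam b b' Th" and x: "x \<in> mean_set b' Th" and "t1 \<in> Th" "t1 \<le> t2" "t2 \<le> inv_into Th b' x"
  shows "b t2 - t2 * x \<le> b t1 - t1 * x"
proof (rule DERIV_nonpos_imp_nonincreasing[OF \<open>t1 \<le> t2\<close>])
  fix u assume "t1 \<le> u" "u \<le> t2"
  then have u: "u \<in> Th" "u \<le> inv_into Th b' x"
    using expfam_interval[OF ef \<open>t1 \<in> Th\<close> natural_param_in[OF x]] assms by auto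
  then have "b' u \<le> x"
    using strict_mono_on_leD[OF expfam_strict_mono[OF ef] u(1) natural_param_in[OF x]]
    by (simp add: mean_natural_param[OF x])
  then show "\<exists>y. ((\<lambda>t. b t - t * x) has_real_derivative y) (at u) \<and> y \<le> 0"
    using phi_derivative[OF ef u(1)] by force
qed

lemma phi_mono_above:
  assumes ef: "expfam b b' Th" and x: "x \<in> mean_set b' Th" and "t2 \<in> Th" "t1 \<le> t2" "inv_into Th b' x \<le> t1"
  shows "b t1 - t1 * x \<le> b t2 - t2 * x"
proof (rule DERIV_nonneg_imp_nondecreasing[OF \<open>t1 \<le> t2\<close>])
  fix u assume "t1 \<le> u" "u \<le> t2"
  then have u: "u \<in> Th" "inv_into Th b' x \<le> u"
    using expfam_interval[OF ef natural_param_in[OF x] \<open>t2 \<in> Th\<close>] assms by auto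
  then have "x \<le> b' u"
    using strict_mono_on_leD[OF expfam_strict_mono[OF ef] natural_param_in[OF x] u(1)]
    by (simp add: mean_natural_param[OF x])
  then show "\<exists>y. ((\<lambda>t. b t - t * x) has_real_derivative y) (at u) \<and> 0 \<le> y"
    using phi_derivative[OF ef u(1)] by force
qed

lemma KL_approx_from_below:
  assumes ef: "expfam b b' Th" and x: "x \<in> mean_set b' Th" and t: "t \<in> mean_set b' Th" and "0 < e"
  shows "\<exists>y\<in>mean_set b' Th. y < t \<and> KL b b' Th x y < KL b b' Th x t + e"
proof -
  define t0 where "t0 = inv_into Th b' t"
  define phi where "phi s = b s - s * x" for s
  have t0: "t0 \<in> Th" unfolding t0_def using natural_param_in[OF t] .
  have "isCont phi t0" unfolding phi_def using phi_derivative[OF ef t0] by (rule DERIV_isCont)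
  then obtain r1 where r1: "0 < r1" "\<And>s. dist s t0 < r1 \<Longrightarrow> dist (phi s) (phi t0) < e"
    using \<open>0 < e\<close> unfolding continuous_at_eps_delta by blast
  obtain r2 where r2: "0 < r2" "ball t0 r2 \<subseteq> Th"
    using ef t0 unfolding expfam_def by (meson openE)
  define s where "s = t0 - min r1 r2 / 2"
  have s: "s \<in> Th" "s < t0" "dist (phi s) (phi t0) < e"
    using r1 r2 unfolding s_def by (auto simp: dist_real_def)
  have "b' s < b' t0" using strict_mono_onD[OF expfam_strict_mono[OF ef] s(1) t0 s(2)] .
  then have "b' s \<in> mean_set b' Th" "b' s < t"
    using s(1) by (auto simp: mean_set_def t0_def mean_natural_param[OF t])
  moreover have "inv_into Th b' (b' s) = s"
    using s(1) by (simp add: inv_into_f_f strict_mono_on_imp_inj_on[OF expfam_strict_mono[OF ef]])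
  ultimately show ?thesis
    using s(3) unfolding KL_eq_phi_diff phi_def t0_def dist_real_def by (intro bexI[of _ "b' s"]) auto
qed

lemma expfam_monotone_divergence:
  assumes ef: "expfam b b' Th"
  shows "monotone_divergence (mean_set b' Th) (KL b b' Th)"
proof
  fix x y z
  assume xyz: "x \<in> mean_set b' Th" "y \<in> mean_set b' Th" "z \<in> mean_set b' Th"
  show "KL b b' Th x x = 0" unfolding KL_def by simp
  show "KL b b' Th x z \<le> KL b b' Th x y" if "y \<le> z" "z \<le> x"
    unfolding KL_eq_phi_diff
    using phi_antimono_below[OF ef xyz(1) natural_param_in[OF xyz(2)]] natural_param_mono[OF ef] xyz that
    by simp
  show "KL b b' Th x y \<le> KL b b' Th x z" if "x \<le> y" "y \<le> z"
    unfolding KL_eq_phi_diff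
    using phi_mono_above[OF ef xyz(1) natural_param_in[OF xyz(3)]] natural_param_mono[OF ef] xyz that
    by simp
next
  fix x t e :: real
  assume "x \<in> mean_set b' Th" "t \<in> mean_set b' Th" "0 < e"
  then show "\<exists>y\<in>mean_set b' Th. y < t \<and> KL b b' Th x y < KL b b' Th x t + e"
    by (rule KL_approx_from_below[OF ef])
qed

lemma distinct_concat_nth_disjoint:
  "\<lbrakk>distinct (concat xss); i < length xss; j < length xss; i \<noteq> j\<rbrakk> \<Longrightarrow> set (xss ! i) \<inter> set (xss ! j) = {}"
proof (induction xss arbitrary: i j)
  case (Cons xs xss)
  then show ?case by (cases i; cases j) fastforce+
qed simp

lemma set_eq_nth_image: "set xs = (!) xs ` {..<length xs}"
  using nth_image[of "length xs" xs] by (simp add: atLeast0LessThan)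

lemma desc_Node: "desc (Node L cs) = (\<Union>j<length cs. desc (cs ! j))"
proof -
  have "desc (Node L cs) = (\<Union>c\<in>set cs. desc c)" by simp
  then show ?thesis by (simp only: set_eq_nth_image[of cs] image_image)
qed

lemma desc_child_subset: "j < length cs \<Longrightarrow> desc (cs ! j) \<subseteq> desc (Node L cs)"
  unfolding desc_Node by blast

lemma Ball_desc_child: "\<lbrakk>\<forall>l\<in>desc (Node L cs). P l; j < length cs\<rbrakk> \<Longrightarrow> \<forall>l\<in>desc (cs ! j). P l"
  using desc_child_subset by blast

lemma wf_tree_child: "\<lbrakk>wf_tree (Node L cs); j < length cs\<rbrakk> \<Longrightarrow> wf_tree (cs ! j)"
  by simp

lemma distinct_leaves_child:
  "\<lbrakk>distinct (leaves (Node L cs)); j < length cs\<rbrakk> \<Longrightarrow> distinct (leaves (cs ! j))"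
  by (simp add: distinct_concat_iff)

lemma disjoint_desc_children:
  "\<lbrakk>distinct (leaves (Node L cs)); j < length cs; k < length cs; j \<noteq> k\<rbrakk> \<Longrightarrow> desc (cs ! j) \<inter> desc (cs ! k) = {}"
  using distinct_concat_nth_disjoint[of "map leaves cs" j k] by simp

lemma sum_desc_Node:
  assumes "distinct (leaves (Node L cs))"
  shows "sum f (desc (Node L cs)) = (\<Sum>j<length cs. sum f (desc (cs ! j)))"
  unfolding desc_Node using disjoint_desc_children[OF assms] by (intro sum.UNION_disjoint) auto

lemma glue_on_children:
  assumes "distinct (leaves (Node L cs))"
  obtains lam where "\<And>j l. \<lbrakk>j < length cs; l \<in> desc (cs ! j)\<rbrakk> \<Longrightarrow> lam l = f j l"
proof
  fix j l assume j: "j < length cs" and l: "l \<in> desc (cs ! j)"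
  let ?k = "SOME k. k < length cs \<and> l \<in> desc (cs ! k)"
  have "?k < length cs \<and> l \<in> desc (cs ! ?k)" by (rule someI[of _ j]) (use j l in blast)
  then have "?k = j" using disjoint_desc_children[OF assms j] l by blast
  then show "f (SOME k. k < length cs \<and> l \<in> desc (cs ! k)) l = f j l" by simp
qed

lemma subtreesD:
  "\<lbrakk>s \<in> subtrees T; wf_tree T; distinct (leaves T)\<rbrakk> \<Longrightarrow> wf_tree s \<and> distinct (leaves s) \<and> desc s \<subseteq> desc T"
proof (induction T)
  case (Node L cs)
  show ?case
  proof (cases "s = Node L cs")
    case False
    then obtain c where c: "c \<in> set cs" "s \<in> subtrees c" using Node.prems(1) by auto
    moreover have "wf_tree c" "distinct (leaves c)" using Node.prems(2,3) c(1) by (auto simp: distinct_concat_iff)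
    ultimately show ?thesis using Node.IH by fastforce
  qed (use Node.prems in simp)
qed simp

lemma val_cong: "(\<And>l. l \<in> desc s \<Longrightarrow> lam l = lam' l) \<Longrightarrow> val s lam = val s lam'"
proof (induction s)
  case (Node L cs)
  then have "map (\<lambda>c. val c lam) cs = map (\<lambda>c. val c lam') cs" by auto
  then show ?case by (cases L) (simp_all only: val.simps)
qed simp

abbreviation P_label :: "bool \<Rightarrow> label" where
  "P_label astar \<equiv> if astar then LMAX else LMIN"

lemma Alt_cong:
  "(\<And>l. l \<in> desc s \<Longrightarrow> lam l = lam' l) \<Longrightarrow> lam \<in> Alt X th astar s \<longleftrightarrow> lam' \<in> Alt X th astar s"
  unfolding Alt_def wins_def using val_cong[of s lam lam'] by auto

lemma wins_Node_neq:
  assumes "cs \<noteq> []"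
  shows "wins th (Node L cs) lam \<noteq> astar \<longleftrightarrow> (if L = P_label astar
      then \<forall>j<length cs. wins th (cs ! j) lam \<noteq> astar else \<exists>j<length cs. wins th (cs ! j) lam \<noteq> astar)"
proof -
  have "set (map (\<lambda>c. val c lam) cs) = (\<lambda>j. val (cs ! j) lam) ` {..<length cs}"
    by (simp only: set_map set_eq_nth_image[of cs] image_image)
  moreover have "{..<length cs} \<noteq> {}" using assms by auto
  ultimately show ?thesis
    by (cases astar; cases L) (auto simp: wins_def Max_less_iff Min_less_iff Min_ge_iff Max_ge_iff not_le)
qed

lemma Alt_Node:
  assumes "cs \<noteq> []"
  shows "lam \<in> Alt X th astar (Node L cs) \<longleftrightarrow> (\<forall>l\<in>desc (Node L cs). lam l \<in> X) \<and>
    (if L = P_label astar then \<forall>j<length cs. lam \<in> Alt X th astar (cs ! j)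
     else \<exists>j<length cs. lam \<in> Alt X th astar (cs ! j))"
  unfolding Alt_def wins_Node_neq[OF assms] using desc_child_subset[of _ cs L] by auto (meson nth_mem)+

lemma Alt_P_Node_glue:
  assumes "L = P_label astar" "cs \<noteq> []" "distinct (leaves (Node L cs))"
    and "\<And>j. j < length cs \<Longrightarrow> f j \<in> Alt X th astar (cs ! j)"
  obtains lam where "lam \<in> Alt X th astar (Node L cs)"
    "\<And>j l. \<lbrakk>j < length cs; l \<in> desc (cs ! j)\<rbrakk> \<Longrightarrow> lam l = f j l"
proof -
  obtain lam where lam: "\<And>j l. \<lbrakk>j < length cs; l \<in> desc (cs ! j)\<rbrakk> \<Longrightarrow> lam l = f j l"
    using glue_on_children[OF assms(3)] by blast
  have "lam \<in> Alt X th astar (cs ! j)" if j: "j < length cs" for j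
    using Alt_cong[of "cs ! j" lam "f j"] lam[OF j] assms(4)[OF j] by simp
  then have "lam \<in> Alt X th astar (Node L cs)"
    unfolding Alt_Node[OF assms(2)] desc_Node using assms(1) by (auto simp: Alt_def)
  then show ?thesis using lam by (rule that)
qed

lemma Alt_Q_Node_extend:
  assumes "L \<noteq> P_label astar" "cs \<noteq> []" "j < length cs" "lam \<in> Alt X th astar (cs ! j)"
    and "\<forall>l\<in>desc (Node L cs). mu l \<in> X"
  shows "(\<lambda>l. if l \<in> desc (cs ! j) then lam l else mu l) \<in> Alt X th astar (Node L cs)"
proof -
  let ?lam = "\<lambda>l. if l \<in> desc (cs ! j) then lam l else mu l"
  have "?lam \<in> Alt X th astar (cs ! j)" using Alt_cong[of "cs ! j" ?lam lam] assms(4) by simp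
  moreover have "\<forall>l\<in>desc (Node L cs). ?lam l \<in> X" using assms(4,5) by (simp add: Alt_def)
  ultimately show ?thesis unfolding Alt_Node[OF assms(2)] using assms(1,3) by auto
qed

section \<open>The inner infimum in closed form\<close>

definition leaf_dist :: "(real \<Rightarrow> real \<Rightarrow> real) \<Rightarrow> real \<Rightarrow> bool \<Rightarrow> real \<Rightarrow> real" where
  "leaf_dist d th astar x = (if (astar \<and> th \<le> x) \<or> (\<not> astar \<and> x < th) then d x th else 0)"

text \<open>For nonnegative weights, \<open>inner_value d th mu astar s w\<close> is the infimum defining \<open>objective\<close>
  (see \<open>objective_eq_inner_value\<close>), computed bottom-up.\<close>

fun inner_value :: "(real \<Rightarrow> real \<Rightarrow> real) \<Rightarrow> real \<Rightarrow> ('l \<Rightarrow> real) \<Rightarrow> bool \<Rightarrow> 'l gtree \<Rightarrow> ('l \<Rightarrow> real) \<Rightarrow> real"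
  where
  "inner_value d th mu astar (Leaf l) w = w l * leaf_dist d th astar (mu l)"
| "inner_value d th mu astar (Node L cs) w =
     (if L = P_label astar then sum_list (map (\<lambda>c. inner_value d th mu astar c w) cs)
      else Min (set (map (\<lambda>c. inner_value d th mu astar c w) cs)))"

lemma inner_value_P_Node:
  "L = P_label astar \<Longrightarrow>
    inner_value d th mu astar (Node L cs) w = (\<Sum>j<length cs. inner_value d th mu astar (cs ! j) w)"
  by (simp add: sum_list_sum_nth atLeast0LessThan)

lemma inner_value_Q_Node:
  "L \<noteq> P_label astar \<Longrightarrow>
    inner_value d th mu astar (Node L cs) w = (MIN j\<in>{..<length cs}. inner_value d th mu astar (cs ! j) w)"
  by (simp add: set_eq_nth_image[of cs] image_image)

declare inner_value.simps(2) [simp del]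

lemma inner_value_Q_Node_le:
  "\<lbrakk>L \<noteq> P_label astar; j < length cs\<rbrakk> \<Longrightarrow>
    inner_value d th mu astar (Node L cs) w \<le> inner_value d th mu astar (cs ! j) w"
  by (simp add: inner_value_Q_Node)

lemma inner_value_Q_Node_attained:
  assumes "L \<noteq> P_label astar" "cs \<noteq> []"
  obtains j where "j < length cs" "inner_value d th mu astar (Node L cs) w = inner_value d th mu astar (cs ! j) w"
proof -
  have "(MIN j\<in>{..<length cs}. inner_value d th mu astar (cs ! j) w)
      \<in> (\<lambda>j. inner_value d th mu astar (cs ! j) w) ` {..<length cs}"
    using assms(2) by (intro Min_in) auto
  then show ?thesis using that by (auto simp only: inner_value_Q_Node[OF assms(1)])
qed

lemma inner_value_cong:
  "(\<And>l. l \<in> desc s \<Longrightarrow> w l = w' l) \<Longrightarrow> inner_value d th mu astar s w = inner_value d th mu astar s w'"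
proof (induction s)
  case (Node L cs)
  then have "map (\<lambda>c. inner_value d th mu astar c w) cs = map (\<lambda>c. inner_value d th mu astar c w') cs"
    by auto
  then show ?case by (simp only: inner_value.simps)
qed simp

lemma inner_value_nonneg:
  "\<lbrakk>wf_tree s; \<forall>l\<in>desc s. 0 \<le> w l; \<forall>l\<in>desc s. 0 \<le> leaf_dist d th astar (mu l)\<rbrakk>
    \<Longrightarrow> 0 \<le> inner_value d th mu astar s w"
proof (induction s)
  case (Node L cs)
  then have "\<forall>c\<in>set cs. 0 \<le> inner_value d th mu astar c w" by auto
  then show ?case using Node.prems(1) by (auto simp: inner_value.simps(2) intro!: sum_list_nonneg)
qed simp

lemma inner_value_scale:
  "\<lbrakk>wf_tree s; 0 \<le> a\<rbrakk> \<Longrightarrow> inner_value d th mu astar s (\<lambda>l. a * w l) = a * inner_value d th mu astar s w"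
proof (induction s)
  case (Node L cs)
  let ?v = "\<lambda>w j. inner_value d th mu astar (cs ! j) w"
  have children: "?v (\<lambda>l. a * w l) j = a * ?v w j" if "j < length cs" for j
    using Node that by simp
  show ?case
  proof (cases "L = P_label astar")
    case True
    then show ?thesis unfolding inner_value_P_Node[OF True] by (simp add: children sum_distrib_left)
  next
    case False
    have "mono (\<lambda>x. a * x)" using Node.prems(2) by (simp add: mono_def mult_left_mono)
    then have "a * (MIN j\<in>{..<length cs}. ?v w j) = (MIN j\<in>{..<length cs}. a * ?v w j)"
      using Node.prems(1) by (subst mono_Min_commute) (auto simp: image_image)
    then show ?thesis unfolding inner_value_Q_Node[OF False] by (simp add: children)
  qed
qed simp

lemma cInf_eq_approx:
  fixes A :: "real set"
  assumes lower: "\<And>x. x \<in> A \<Longrightarrow> g \<le> x" and approx: "\<And>e. 0 < e \<Longrightarrow> \<exists>x\<in>A. x < g + e"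
  shows "Inf A = g"
proof (rule antisym)
  have "A \<noteq> {}" using approx[of 1] by auto
  then show "g \<le> Inf A" using lower by (rule cInf_greatest)
  show "Inf A \<le> g"
  proof (rule field_le_epsilon)
    fix e :: real assume "0 < e"
    then obtain x where "x \<in> A" "x < g + e" using approx by blast
    moreover have "bdd_below A" using lower by (auto simp: bdd_below_def)
    ultimately show "Inf A \<le> g + e" by (meson cInf_lower less_imp_le order_trans)
  qed
qed

lemma exists_Alt_near_P_Node:
  assumes L: "L = P_label astar" and cs: "cs \<noteq> []" and dis: "distinct (leaves (Node L cs))"
    and children: "\<And>j e'. \<lbrakk>j < length cs; 0 < e'\<rbrakk> \<Longrightarrow> \<exists>lam\<in>Alt X th astar (cs ! j).
      (\<Sum>l\<in>desc (cs ! j). w l * d (mu l) (lam l)) < inner_value d th mu astar (cs ! j) w + e'"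
    and "0 < e"
  shows "\<exists>lam\<in>Alt X th astar (Node L cs).
    (\<Sum>l\<in>desc (Node L cs). w l * d (mu l) (lam l)) < inner_value d th mu astar (Node L cs) w + e"
proof -
  let ?n = "length cs"
  let ?v = "inner_value d th mu astar"
  let ?S = "\<lambda>lam A. \<Sum>l\<in>A. w l * d (mu l) (lam l)"
  have "0 < e / ?n" using cs \<open>0 < e\<close> by simp
  then have "\<forall>j. \<exists>lam. j < ?n \<longrightarrow> lam \<in> Alt X th astar (cs ! j) \<and> ?S lam (desc (cs ! j)) < ?v (cs ! j) w + e / ?n"
    using children by blast
  then obtain f where f: "\<And>j. j < ?n \<Longrightarrow> f j \<in> Alt X th astar (cs ! j) \<and> ?S (f j) (desc (cs ! j)) < ?v (cs ! j) w + e / ?n"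
    by metis
  then have f_Alt: "\<And>j. j < ?n \<Longrightarrow> f j \<in> Alt X th astar (cs ! j)" by blast
  obtain lam where lam_Alt: "lam \<in> Alt X th astar (Node L cs)"
    and lam: "\<And>j l. \<lbrakk>j < ?n; l \<in> desc (cs ! j)\<rbrakk> \<Longrightarrow> lam l = f j l"
    using Alt_P_Node_glue[OF L cs dis f_Alt] by blast
  have "?S lam (desc (Node L cs)) = (\<Sum>j<?n. ?S (f j) (desc (cs ! j)))"
    unfolding sum_desc_Node[OF dis] using lam by simp
  also have "\<dots> < (\<Sum>j<?n. ?v (cs ! j) w + e / ?n)" using f cs by (intro sum_strict_mono) auto
  also have "\<dots> = ?v (Node L cs) w + e" using cs by (simp add: inner_value_P_Node[OF L] sum.distrib)
  finally show ?thesis using lam_Alt by blast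
qed

context monotone_divergence
begin

lemma leaf_dist_le:
  assumes "x \<in> X" "y \<in> X" "th \<in> X" "(th \<le> y) \<noteq> astar"
  shows "leaf_dist d th astar x \<le> d x y"
  using assms d_nonneg[OF assms(1,2)] d_antimono_below[OF assms(1,2,3)] d_mono_above[OF assms(1,3,2)]
  unfolding leaf_dist_def by (cases astar) auto

lemma exists_flip_leaf:
  assumes x: "x \<in> X" and th: "th \<in> X" and "0 < e"
  shows "\<exists>y\<in>X. (th \<le> y) \<noteq> astar \<and> d x y < leaf_dist d th astar x + e"
proof -
  consider "astar" "th \<le> x" | "\<not> astar" "x < th" | "\<not> ((astar \<and> th \<le> x) \<or> (\<not> astar \<and> x < th))"
    by blast
  then show ?thesis
  proof cases
    case 1
    then show ?thesis using d_approx_from_below[OF x th \<open>0 < e\<close>] by (auto simp: leaf_dist_def not_le)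
  next
    case 2
    then show ?thesis using th \<open>0 < e\<close> by (auto simp: leaf_dist_def)
  next
    case 3
    then show ?thesis using x \<open>0 < e\<close> d_self[OF x] by (intro bexI[of _ x]) (auto simp: leaf_dist_def)
  qed
qed

lemma exists_flip_leaf_weighted:
  assumes x: "x \<in> X" and th: "th \<in> X" and a: "0 \<le> a" and e: "0 < e"
  shows "\<exists>y\<in>X. (th \<le> y) \<noteq> astar \<and> a * d x y < a * leaf_dist d th astar x + e"
proof -
  obtain y where y: "y \<in> X" "(th \<le> y) \<noteq> astar" "d x y < leaf_dist d th astar x + e / (a + 1)"
    using exists_flip_leaf[OF x th] a e by (metis add_nonneg_pos divide_pos_pos zero_less_one)
  have "a * d x y \<le> a * leaf_dist d th astar x + e * (a / (a + 1))"
    using mult_left_mono[OF less_imp_le[OF y(3)] a] by (simp add: algebra_simps)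
  also have "\<dots> < a * leaf_dist d th astar x + e * 1"
    using a e by (intro add_strict_left_mono mult_strict_left_mono) auto
  finally show ?thesis using y(1,2) by auto
qed

lemma inner_value_le_Alt:
  assumes th: "th \<in> X"
  shows "\<lbrakk>wf_tree s; distinct (leaves s); \<forall>l\<in>desc s. mu l \<in> X; \<forall>l\<in>desc s. 0 \<le> w l;
    lam \<in> Alt X th astar s\<rbrakk> \<Longrightarrow> inner_value d th mu astar s w \<le> (\<Sum>l\<in>desc s. w l * d (mu l) (lam l))"
proof (induction s)
  case (Leaf l)
  then have "lam l \<in> X" "(th \<le> lam l) \<noteq> astar" by (auto simp: Alt_def wins_def)
  then show ?case using leaf_dist_le[OF _ _ th] Leaf.prems(3,4) by (simp add: mult_left_mono)
next
  case (Node L cs)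
  let ?S = "\<lambda>A. \<Sum>l\<in>A. w l * d (mu l) (lam l)"
  have cs: "cs \<noteq> []" using Node.prems(1) by simp
  have IH: "inner_value d th mu astar (cs ! j) w \<le> ?S (desc (cs ! j))"
    if j: "j < length cs" and alt: "lam \<in> Alt X th astar (cs ! j)" for j
    by (rule Node.IH[OF nth_mem[OF j] wf_tree_child[OF Node.prems(1) j] distinct_leaves_child[OF Node.prems(2) j]
          Ball_desc_child[OF Node.prems(3) j] Ball_desc_child[OF Node.prems(4) j] alt])
  show ?case
  proof (cases "L = P_label astar")
    case True
    then have "\<forall>j<length cs. lam \<in> Alt X th astar (cs ! j)" using Node.prems(5) Alt_Node[OF cs] by simp
    then show ?thesis
      unfolding inner_value_P_Node[OF True] sum_desc_Node[OF Node.prems(2)] using IH by (auto intro!: sum_mono)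
  next
    case False
    then obtain j where j: "j < length cs" "lam \<in> Alt X th astar (cs ! j)"
      using Node.prems(5) Alt_Node[OF cs] by auto
    have "inner_value d th mu astar (Node L cs) w \<le> inner_value d th mu astar (cs ! j) w"
      by (rule inner_value_Q_Node_le[OF False j(1)])
    also have "\<dots> \<le> ?S (desc (cs ! j))" by (rule IH[OF j])
    also have "\<dots> \<le> ?S (desc (Node L cs))"
      using Node.prems(3-5) desc_child_subset[OF j(1)]
      by (intro sum_mono2) (auto simp: Alt_def intro!: mult_nonneg_nonneg d_nonneg)
    finally show ?thesis .
  qed
qed

lemma exists_Alt_near:
  assumes th: "th \<in> X"
  shows "\<lbrakk>wf_tree s; distinct (leaves s); \<forall>l\<in>desc s. mu l \<in> X; \<forall>l\<in>desc s. 0 \<le> w l; 0 < e\<rbrakk>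
    \<Longrightarrow> \<exists>lam\<in>Alt X th astar s. (\<Sum>l\<in>desc s. w l * d (mu l) (lam l)) < inner_value d th mu astar s w + e"
proof (induction s arbitrary: e)
  case (Leaf l)
  then have mu: "mu l \<in> X" and w: "0 \<le> w l" by auto
  obtain y where "y \<in> X" "(th \<le> y) \<noteq> astar" "w l * d (mu l) y < w l * leaf_dist d th astar (mu l) + e"
    using exists_flip_leaf_weighted[OF mu th w Leaf.prems(5)] by auto
  then show ?case by (intro bexI[of _ "\<lambda>_. y"]) (auto simp: Alt_def wins_def)
next
  case (Node L cs)
  let ?n = "length cs"
  let ?v = "inner_value d th mu astar"
  let ?S = "\<lambda>lam A. \<Sum>l\<in>A. w l * d (mu l) (lam l)"
  have cs: "cs \<noteq> []" using Node.prems(1) by simp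
  have IH: "\<exists>lam\<in>Alt X th astar (cs ! j). ?S lam (desc (cs ! j)) < ?v (cs ! j) w + e'"
    if j: "j < ?n" and e': "0 < e'" for j e'
    by (rule Node.IH[OF nth_mem[OF j] wf_tree_child[OF Node.prems(1) j] distinct_leaves_child[OF Node.prems(2) j]
          Ball_desc_child[OF Node.prems(3) j] Ball_desc_child[OF Node.prems(4) j] e'])
  show ?case
  proof (cases "L = P_label astar")
    case True
    then show ?thesis by (rule exists_Alt_near_P_Node[OF _ cs Node.prems(2) IH Node.prems(5)])
  next
    case False
    then obtain j where j: "j < ?n" "?v (Node L cs) w = ?v (cs ! j) w"
      using inner_value_Q_Node_attained[OF _ cs] by metis
    then obtain lj where lj: "lj \<in> Alt X th astar (cs ! j)" "?S lj (desc (cs ! j)) < ?v (cs ! j) w + e"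
      using IH Node.prems(5) by blast
    define lam where "lam l = (if l \<in> desc (cs ! j) then lj l else mu l)" for l
    have lam_Alt: "lam \<in> Alt X th astar (Node L cs)"
      unfolding lam_def by (rule Alt_Q_Node_extend[OF False cs j(1) lj(1) Node.prems(3)])
    have "?S lam (desc (Node L cs)) = ?S lam (desc (cs ! j))"
      using desc_child_subset[OF j(1)] Node.prems(3)
      by (intro sum.mono_neutral_right) (auto simp: lam_def d_self)
    also have "\<dots> = ?S lj (desc (cs ! j))" by (simp add: lam_def)
    also have "\<dots> < ?v (Node L cs) w + e" using lj(2) j(2) by simp
    finally show ?thesis using lam_Alt by blast
  qed
qed

lemma objective_eq_inner_value:
  assumes "th \<in> X" "wf_tree s" "distinct (leaves s)" "\<forall>l\<in>desc s. mu l \<in> X" "\<forall>l\<in>desc s. 0 \<le> w l"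
  shows "objective d X th astar mu s w = inner_value d th mu astar s w"
  unfolding objective_def
  using inner_value_le_Alt[OF assms] exists_Alt_near[OF assms] by (intro cInf_eq_approx) auto

end

section \<open>Optimality of the recursive formula\<close>

text \<open>The bound is stated on the whole nonnegative cone rather than on the simplex, so that it
  applies to the restriction of a weight vector to a subtree.\<close>

definition maximiser ::
  "(real \<Rightarrow> real \<Rightarrow> real) \<Rightarrow> real \<Rightarrow> ('l \<Rightarrow> real) \<Rightarrow> bool \<Rightarrow> 'l gtree \<Rightarrow> real \<Rightarrow> ('l \<Rightarrow> real) \<Rightarrow> bool"
  where
  "maximiser d th mu astar s ds ws \<longleftrightarrow> ws \<in> tsimplex s \<and> inner_value d th mu astar s ws = ds \<and>
     (\<forall>w. (\<forall>l\<in>desc s. 0 \<le> w l) \<longrightarrow> inner_value d th mu astar s w \<le> ds * sum w (desc s))"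

lemma maximiser_bound:
  "\<lbrakk>maximiser d th mu astar s ds ws; \<forall>l\<in>desc s. 0 \<le> w l\<rbrakk>
    \<Longrightarrow> inner_value d th mu astar s w \<le> ds * sum w (desc s)"
  unfolding maximiser_def by blast

lemma maximiser_Leaf:
  "maximiser d th mu astar (Leaf l) (leaf_dist d th astar (mu l)) (\<lambda>m. if m = l then 1 else 0)"
  by (auto simp: maximiser_def tsimplex_def mult.commute)

lemma maximiser_zeroI:
  assumes "wf_tree s" "\<forall>l\<in>desc s. 0 \<le> leaf_dist d th astar (mu l)" "ws \<in> tsimplex s"
    and nonpos: "\<And>w. (\<forall>l\<in>desc s. 0 \<le> w l) \<Longrightarrow> inner_value d th mu astar s w \<le> 0"
  shows "maximiser d th mu astar s 0 ws"
proof -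
  have "\<forall>l\<in>desc s. 0 \<le> ws l" using assms(3) by (simp add: tsimplex_def)
  then have "inner_value d th mu astar s ws = 0"
    using nonpos inner_value_nonneg[OF assms(1) _ assms(2)] by (meson antisym)
  then show ?thesis using assms(3) nonpos unfolding maximiser_def by simp
qed

lemma inner_value_P_Node_le:
  assumes L: "L = P_label astar" and dis: "distinct (leaves (Node L cs))"
    and children: "\<And>j. j < length cs \<Longrightarrow> maximiser d th mu astar (cs ! j) (D j) (W j)"
    and best: "\<And>j. j < length cs \<Longrightarrow> D j \<le> c"
    and w: "\<forall>l\<in>desc (Node L cs). 0 \<le> w l"
  shows "inner_value d th mu astar (Node L cs) w \<le> c * sum w (desc (Node L cs))"
proof -
  have "inner_value d th mu astar (Node L cs) w = (\<Sum>j<length cs. inner_value d th mu astar (cs ! j) w)"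
    by (rule inner_value_P_Node[OF L])
  also have "\<dots> \<le> (\<Sum>j<length cs. c * sum w (desc (cs ! j)))"
  proof (rule sum_mono)
    fix j assume "j \<in> {..<length cs}"
    then have j: "j < length cs" by simp
    have w_j: "\<forall>l\<in>desc (cs ! j). 0 \<le> w l" using Ball_desc_child[OF w j] .
    have "inner_value d th mu astar (cs ! j) w \<le> D j * sum w (desc (cs ! j))"
      by (rule maximiser_bound[OF children[OF j] w_j])
    also have "\<dots> \<le> c * sum w (desc (cs ! j))" using best[OF j] w_j by (intro mult_right_mono sum_nonneg) auto
    finally show "inner_value d th mu astar (cs ! j) w \<le> c * sum w (desc (cs ! j))" .
  qed
  also have "\<dots> = c * sum w (desc (Node L cs))" unfolding sum_desc_Node[OF dis] by (simp add: sum_distrib_left)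
  finally show ?thesis .
qed

lemma maximiser_P_Node:
  assumes L: "L = P_label astar" and wf: "wf_tree (Node L cs)" and dis: "distinct (leaves (Node L cs))"
    and dist_nonneg: "\<forall>l\<in>desc (Node L cs). 0 \<le> leaf_dist d th astar (mu l)"
    and children: "\<And>j. j < length cs \<Longrightarrow> maximiser d th mu astar (cs ! j) (D j) (W j)"
    and i: "i < length cs" and best: "\<And>j. j < length cs \<Longrightarrow> D j \<le> D i"
    and w: "\<And>j l. \<lbrakk>j < length cs; l \<in> desc (cs ! j)\<rbrakk> \<Longrightarrow> w l = (if j = i then W i l else 0)"
  shows "maximiser d th mu astar (Node L cs) (D i) w"
proof -
  let ?v = "inner_value d th mu astar"
  have W_i: "W i \<in> tsimplex (cs ! i)" "?v (cs ! i) (W i) = D i" using children[OF i] by (auto simp: maximiser_def)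
  have w_nonneg: "\<forall>l\<in>desc (Node L cs). 0 \<le> w l"
  proof
    fix l assume "l \<in> desc (Node L cs)"
    then obtain j where j: "j < length cs" "l \<in> desc (cs ! j)" unfolding desc_Node by blast
    have "0 \<le> W i l" if "j = i" using W_i(1) j(2) that unfolding tsimplex_def by blast
    then show "0 \<le> w l" using w[OF j] by simp
  qed
  have mass: "sum w (desc (cs ! j)) = (if j = i then 1 else 0)" if j: "j < length cs" for j
  proof -
    have "sum w (desc (cs ! j)) = (\<Sum>l\<in>desc (cs ! j). if j = i then W i l else 0)"
      by (rule sum.cong) (simp_all add: w[OF j])
    then show ?thesis using W_i(1) by (simp add: tsimplex_def)
  qed
  have "sum w (desc (Node L cs)) = 1" unfolding sum_desc_Node[OF dis] using i by (simp add: mass)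
  then have simplex: "w \<in> tsimplex (Node L cs)" using w_nonneg unfolding tsimplex_def by blast
  have value_child: "?v (cs ! j) w = (if j = i then D i else 0)" if j: "j < length cs" for j
  proof (cases "j = i")
    case True
    then show ?thesis using inner_value_cong[of "cs ! j" w "W i"] w[OF j] W_i(2) by simp
  next
    case False
    have w_j: "\<forall>l\<in>desc (cs ! j). 0 \<le> w l" using Ball_desc_child[OF w_nonneg j] .
    have "?v (cs ! j) w \<le> 0" using maximiser_bound[OF children[OF j] w_j] mass[OF j] False by simp
    moreover have "0 \<le> ?v (cs ! j) w"
      by (rule inner_value_nonneg[OF wf_tree_child[OF wf j] w_j Ball_desc_child[OF dist_nonneg j]])
    ultimately show ?thesis using False by simp
  qed
  have "?v (Node L cs) w = D i" using i by (simp add: inner_value_P_Node[OF L] value_child)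
  then show ?thesis
    using simplex inner_value_P_Node_le[OF L dis children best] unfolding maximiser_def by blast
qed

lemma inner_value_Q_Node_harmonic_le:
  assumes L: "L \<noteq> P_label astar" and dis: "distinct (leaves (Node L cs))"
    and children: "\<And>j. j < length cs \<Longrightarrow> maximiser d th mu astar (cs ! j) (D j) (W j)"
    and pos: "\<And>j. j < length cs \<Longrightarrow> 0 < D j"
    and w: "\<forall>l\<in>desc (Node L cs). 0 \<le> w l"
  shows "inner_value d th mu astar (Node L cs) w * (\<Sum>j<length cs. 1 / D j) \<le> sum w (desc (Node L cs))"
proof -
  let ?t = "inner_value d th mu astar (Node L cs) w"
  have "?t / D j \<le> sum w (desc (cs ! j))" if j: "j < length cs" for j
  proof -
    have w_j: "\<forall>l\<in>desc (cs ! j). 0 \<le> w l" using Ball_desc_child[OF w j] .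
    have "?t \<le> inner_value d th mu astar (cs ! j) w" by (rule inner_value_Q_Node_le[OF L j])
    also have "\<dots> \<le> D j * sum w (desc (cs ! j))" by (rule maximiser_bound[OF children[OF j] w_j])
    finally show ?thesis using pos[OF j] by (simp add: divide_le_eq mult.commute)
  qed
  then have "(\<Sum>j<length cs. ?t / D j) \<le> (\<Sum>j<length cs. sum w (desc (cs ! j)))" by (intro sum_mono) auto
  then show ?thesis unfolding sum_desc_Node[OF dis] by (simp add: sum_distrib_left)
qed

lemma maximiser_Q_Node:
  assumes L: "L \<noteq> P_label astar" and wf: "wf_tree (Node L cs)" and dis: "distinct (leaves (Node L cs))"
    and children: "\<And>j. j < length cs \<Longrightarrow> maximiser d th mu astar (cs ! j) (D j) (W j)"
    and pos: "\<And>j. j < length cs \<Longrightarrow> 0 < D j" and H: "H = (\<Sum>j<length cs. 1 / D j)"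
    and w: "\<And>j l. \<lbrakk>j < length cs; l \<in> desc (cs ! j)\<rbrakk> \<Longrightarrow> w l = W j l / D j / H"
  shows "maximiser d th mu astar (Node L cs) (1 / H) w"
proof -
  let ?v = "inner_value d th mu astar"
  have cs: "cs \<noteq> []" using wf by simp
  have H_pos: "0 < H" unfolding H using cs pos by (intro sum_pos) auto
  have w_scaled: "w l = 1 / (D j * H) * W j l" if "j < length cs" "l \<in> desc (cs ! j)" for j l
    using w[OF that] by simp
  have W_j: "W j \<in> tsimplex (cs ! j)" "?v (cs ! j) (W j) = D j" if "j < length cs" for j
    using children[OF that] by (auto simp: maximiser_def)
  have w_nonneg: "\<forall>l\<in>desc (Node L cs). 0 \<le> w l"
  proof
    fix l assume "l \<in> desc (Node L cs)"
    then obtain j where j: "j < length cs" "l \<in> desc (cs ! j)" unfolding desc_Node by blast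
    then show "0 \<le> w l" using w_scaled[OF j] W_j(1)[OF j(1)] pos[OF j(1)] H_pos by (simp add: tsimplex_def)
  qed
  have mass: "sum w (desc (cs ! j)) = 1 / D j / H" if j: "j < length cs" for j
  proof -
    have "sum w (desc (cs ! j)) = 1 / (D j * H) * sum (W j) (desc (cs ! j))"
      unfolding sum_distrib_left by (rule sum.cong) (simp_all add: w_scaled[OF j])
    then show ?thesis using W_j(1)[OF j] by (simp add: tsimplex_def)
  qed
  have "sum w (desc (Node L cs)) = (\<Sum>j<length cs. 1 / D j) / H"
    unfolding sum_desc_Node[OF dis] by (simp add: mass sum_divide_distrib)
  also have "\<dots> = 1" using H_pos H by simp
  finally have simplex: "w \<in> tsimplex (Node L cs)" using w_nonneg unfolding tsimplex_def by blast
  have value_child: "?v (cs ! j) w = 1 / H" if j: "j < length cs" for j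
  proof -
    have "?v (cs ! j) w = ?v (cs ! j) (\<lambda>l. 1 / (D j * H) * W j l)"
      using w_scaled[OF j] by (intro inner_value_cong) simp
    also have "\<dots> = 1 / (D j * H) * ?v (cs ! j) (W j)"
      using pos[OF j] H_pos by (intro inner_value_scale[OF wf_tree_child[OF wf j]]) simp
    finally show ?thesis using W_j(2)[OF j] pos[OF j] by simp
  qed
  have "(\<lambda>j. ?v (cs ! j) w) ` {..<length cs} = {1 / H}" using cs value_child by auto
  then have "?v (Node L cs) w = 1 / H" by (simp add: inner_value_Q_Node[OF L])
  moreover have "?v (Node L cs) w' \<le> 1 / H * sum w' (desc (Node L cs))"
    if "\<forall>l\<in>desc (Node L cs). 0 \<le> w' l" for w'
    using inner_value_Q_Node_harmonic_le[OF L dis children pos] that H_pos by (simp add: H[symmetric] le_divide_eq)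
  ultimately show ?thesis using simplex unfolding maximiser_def by blast
qed

lemma children_maximisers:
  assumes IH: "list_all2 (\<lambda>c r. rec_dw d th mu astar c (fst r) (snd r) \<and>
      (wf_tree c \<longrightarrow> distinct (leaves c) \<longrightarrow> (\<forall>l\<in>desc c. 0 \<le> leaf_dist d th astar (mu l))
        \<longrightarrow> maximiser d th mu astar c (fst r) (snd r))) cs rs"
    and wf: "wf_tree (Node L cs)" and dis: "distinct (leaves (Node L cs))"
    and nonneg: "\<forall>l\<in>desc (Node L cs). 0 \<le> leaf_dist d th astar (mu l)"
  shows "length rs = length cs" "\<And>j. j < length cs \<Longrightarrow> maximiser d th mu astar (cs ! j) (fst (rs ! j)) (snd (rs ! j))"
proof -
  show "length rs = length cs" using IH by (simp add: list_all2_lengthD)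
  fix j assume j: "j < length cs"
  then show "maximiser d th mu astar (cs ! j) (fst (rs ! j)) (snd (rs ! j))"
    using IH wf_tree_child[OF wf j] distinct_leaves_child[OF dis j] Ball_desc_child[OF nonneg j]
    by (simp add: list_all2_conv_all_nth)
qed

lemma rec_dw_maximiser:
  "\<lbrakk>rec_dw d th mu astar s ds ws; wf_tree s; distinct (leaves s); \<forall>l\<in>desc s. 0 \<le> leaf_dist d th astar (mu l)\<rbrakk>
    \<Longrightarrow> maximiser d th mu astar s ds ws"
proof (induction rule: rec_dw.induct)
  case (leaf l)
  show ?case using maximiser_Leaf[of d th mu astar l] by (simp add: leaf_dist_def)
next
  case (P_pos L cs rs i w)
  note children = children_maximisers[OF P_pos.IH P_pos.prems]
  have "fst (rs ! j) \<le> fst (rs ! i)" if "j < length cs" for j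
    using that children(1) P_pos.hyps(3) by (simp add: Max_ge)
  then show ?case
    using maximiser_P_Node[OF P_pos.hyps(1) P_pos.prems children(2) P_pos.hyps(2)] P_pos.hyps(5) by blast
next
  case (P_zero L cs rs w)
  note children = children_maximisers[OF P_zero.IH P_zero.prems]
  have "fst (rs ! j) \<le> 0" if "j < length cs" for j
  proof -
    have "fst (rs ! j) \<le> Max (fst ` set rs)" using that children(1) by (intro Max_ge) auto
    then show ?thesis using P_zero.hyps(2) by simp
  qed
  then have "inner_value d th mu astar (Node L cs) w' \<le> 0"
    if "\<forall>l\<in>desc (Node L cs). 0 \<le> w' l" for w'
    using inner_value_P_Node_le[OF P_zero.hyps(1) P_zero.prems(2) children(2), of 0 w'] that by simp
  then show ?case using maximiser_zeroI[OF P_zero.prems(1,3) P_zero.hyps(3)] by blast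
next
  case (Q_pos L cs rs H w)
  have L: "L \<noteq> P_label astar" using Q_pos.hyps(1) by (cases astar) auto
  note children = children_maximisers[OF Q_pos.IH Q_pos.prems]
  have "H = (\<Sum>j<length cs. 1 / fst (rs ! j))"
    using Q_pos.hyps(3) children(1) by (simp add: sum_list_sum_nth atLeast0LessThan)
  moreover have "0 < fst (rs ! j)" if "j < length cs" for j using Q_pos.hyps(2) that children(1) by simp
  ultimately show ?case
    using maximiser_Q_Node[OF L Q_pos.prems(1,2) children(2)] Q_pos.hyps(4) by blast
next
  case (Q_zero L cs rs w)
  have L: "L \<noteq> P_label astar" using Q_zero.hyps(1) by (cases astar) auto
  note children = children_maximisers[OF Q_zero.IH Q_zero.prems]
  obtain j where j: "j < length cs" "fst (rs ! j) = 0"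
    using Q_zero.hyps(2) children(1) by (metis in_set_conv_nth)
  have "inner_value d th mu astar (Node L cs) w' \<le> 0"
    if w': "\<forall>l\<in>desc (Node L cs). 0 \<le> w' l" for w'
  proof -
    have "\<forall>l\<in>desc (cs ! j). 0 \<le> w' l" using Ball_desc_child[OF w' j(1)] .
    then have "inner_value d th mu astar (cs ! j) w' \<le> 0" using maximiser_bound[OF children(2)[OF j(1)]] j(2) by simp
    then show ?thesis using inner_value_Q_Node_le[OF L j(1)] by (rule order_trans[rotated])
  qed
  then show ?case using maximiser_zeroI[OF Q_zero.prems(1,3) Q_zero.hyps(3)] by blast
qed

lemma (in monotone_divergence) rec_dw_optimal:
  assumes th: "th \<in> X" and wf: "wf_tree s" and dis: "distinct (leaves s)" and mu: "\<forall>l\<in>desc s. mu l \<in> X"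
    and rec: "rec_dw d th mu astar s ds ws"
  shows "ws \<in> tsimplex s \<and> objective d X th astar mu s ws = ds
    \<and> (\<forall>w\<in>tsimplex s. objective d X th astar mu s w \<le> ds)"
proof -
  have "\<forall>l\<in>desc s. 0 \<le> leaf_dist d th astar (mu l)" using mu d_nonneg th by (simp add: leaf_dist_def)
  then have max: "maximiser d th mu astar s ds ws" by (rule rec_dw_maximiser[OF rec wf dis])
  have objective: "objective d X th astar mu s w = inner_value d th mu astar s w" if "w \<in> tsimplex s" for w
    using objective_eq_inner_value[OF th wf dis mu] that by (simp add: tsimplex_def)
  have "objective d X th astar mu s w \<le> ds" if w: "w \<in> tsimplex s" for w
  proof -
    have w_nonneg: "\<forall>l\<in>desc s. 0 \<le> w l" and w_sum: "sum w (desc s) = 1" using w by (auto simp: tsimplex_def)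
    show ?thesis using maximiser_bound[OF max w_nonneg] w_sum objective[OF w] by simp
  qed
  then show ?thesis using max objective by (simp add: maximiser_def)
qed

theorem theorem2:
  fixes b b' :: "real \<Rightarrow> real" and Th :: "real set" and th :: real
    and T :: "'l gtree" and mu :: "'l \<Rightarrow> real"
    and s :: "'l gtree" and ds :: real and ws :: "'l \<Rightarrow> real"
  assumes "expfam b b' Th"
    and "th \<in> mean_set b' Th"
    and "wf_tree T"
    and "distinct (leaves T)"
    and "\<forall>l\<in>desc T. mu l \<in> mean_set b' Th"
    and "s \<in> subtrees T"
    and "rec_dw (KL b b' Th) th mu (wins th T mu) s ds ws"
  shows "ws \<in> tsimplex s
    \<and> objective (KL b b' Th) (mean_set b' Th) th (wins th T mu) mu s ws = ds
    \<and> (\<forall>w\<in>tsimplex s. objective (KL b b' Th) (mean_set b' Th) th (wins th T mu) mu s w \<le> ds)"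
proof -
  interpret monotone_divergence "mean_set b' Th" "KL b b' Th"
    by (rule expfam_monotone_divergence[OF assms(1)])
  have s: "wf_tree s" "distinct (leaves s)" "desc s \<subseteq> desc T" using subtreesD[OF assms(6,3,4)] by auto
  then have "\<forall>l\<in>desc s. mu l \<in> mean_set b' Th" using assms(5) by blast
  then show ?thesis by (rule rec_dw_optimal[OF assms(2) s(1,2) _ assms(7)])
qed

end
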